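(* Let $\pi$ be a $k$-permutation and $\alpha,\beta\in(0,1)$. Then $$\lim_{n\to\infty} n^3\,\frac{\partial}{\partial x_{\lfloor\alpha n\rfloor,\lfloor\beta n\rfloor}}h_{\pi,n}(0,\dots,0)=\lim_{n\to\infty}\frac{k!}{n^{2k-4}}\sum_{\substack{f,g:[k]\to[n]\\ \text{strictly increasing}}}\ \sum_{m\in[k]}B^{\lfloor\alpha n\rfloor,\lfloor\beta n\rfloor}_{f(m),\,g(\pi(m))}$$ whenever either of the two limits exists (in which case both exist).
   Context: A $k$-permutation is a bijection of $[k]=\{1,\dots,k\}$. Fix $n\ge2$. For $k',l\in[n-1]$ let $B^{k',l}\in\mathbb{R}^{n\times n}$ have entries $+1$ at $(k',l)$ and $(k'+1,l+1)$, $-1$ at $(k'+1,l)$ and $(k',l+1)$, and $0$ elsewhere. Let $J$ be the $n\times n$ matrix with all entries $1/n$, and for $x=(x_{i,j})_{i,j\in[n-1]}$ let $J^x=J+\sum_{i,j\in[n-1]}x_{i,j}B^{i,j}$. For a $k$-permutation $\pi$, $h_{\pi,n}(x)$ is the density of $\pi$ in the step permuton of $J^x$, which is the polynomial $h_{\pi,n}(x)=\frac{k!}{n^k}\sum_{f,g}\frac{1}{\prod_{i\in[n]}|f^{-1}(i)|!\,|g^{-1}(i)|!}\prod_{m\in[k]}(J^x)_{f(m),g(\pi(m))}$, the sum over all non-decreasing functions $f,g:[k]\to[n]$. The sequences in $n$ are considered for $n$ large enough that $\lfloor\alpha n\rfloor,\lfloor\beta n\rfloor\in[n-1]$. *)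

theory Defs
  imports "HOL-Analysis.Analysis"
begin

definition Bmat :: "nat \<Rightarrow> nat \<Rightarrow> nat \<Rightarrow> nat \<Rightarrow> real" where
  "Bmat k' l i j =
     (if (i = k' \<and> j = l) \<or> (i = k' + 1 \<and> j = l + 1) then 1
      else if (i = k' + 1 \<and> j = l) \<or> (i = k' \<and> j = l + 1) then -1
      else 0)"

definition Jx :: "nat \<Rightarrow> (nat \<Rightarrow> nat \<Rightarrow> real) \<Rightarrow> nat \<Rightarrow> nat \<Rightarrow> real" where
  "Jx n x i j = 1 / real n + (\<Sum>a\<in>{1..n-1}. \<Sum>b\<in>{1..n-1}. x a b * Bmat a b i j)"

definition nondec_funs :: "nat \<Rightarrow> nat \<Rightarrow> (nat \<Rightarrow> nat) set" where
  "nondec_funs k n = {f \<in> {1..k} \<rightarrow>\<^sub>E {1..n}. mono_on {1..k} f}"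

definition strinc_funs :: "nat \<Rightarrow> nat \<Rightarrow> (nat \<Rightarrow> nat) set" where
  "strinc_funs k n = {f \<in> {1..k} \<rightarrow>\<^sub>E {1..n}. strict_mono_on {1..k} f}"

text \<open>Density h_{pi,n}(x) of the k-permutation pi in the step permuton of J^x.\<close>
definition hdens :: "(nat \<Rightarrow> nat) \<Rightarrow> nat \<Rightarrow> nat \<Rightarrow> (nat \<Rightarrow> nat \<Rightarrow> real) \<Rightarrow> real" where
  "hdens \<pi> k n x = fact k / real n ^ k *
     (\<Sum>f\<in>nondec_funs k n. \<Sum>g\<in>nondec_funs k n.
        (1 / (\<Prod>i\<in>{1..n}. fact (card {m\<in>{1..k}. f m = i}) * fact (card {m\<in>{1..k}. g m = i})))
        * (\<Prod>m\<in>{1..k}. Jx n x (f m) (g (\<pi> m))))"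

definition dh0 :: "(nat \<Rightarrow> nat) \<Rightarrow> nat \<Rightarrow> nat \<Rightarrow> nat \<Rightarrow> nat \<Rightarrow> real" where
  "dh0 \<pi> k n a b = deriv (\<lambda>t. hdens \<pi> k n (\<lambda>i j. if i = a \<and> j = b then t else 0)) 0"

end

theory Submission
  imports Defs
begin

(* Differentiating h at the origin in the direction B^{a,b} = (e_a - e_{a+1}) (e_b - e_{b+1})^T
   factorizes n^3 dh as k! n^{4-2k} sum_m D_a(m) D_b(pi m), where
   D_c(m) = diff_sum k n w c m = sum_f w(f) (e_c - e_{c+1})(f m) runs over the non-decreasing
   f : [k] -> [n] with weight w(f) = 1 / prod_i |f^{-1}(i)|!. As w = 1 on injective f, the
   right-hand side is the same expression with w replaced by the indicator of injectivity, so
   the two sides differ only through the part of w carried by non-injective f.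

   Shifting all values >= c up by one maps the f with f(m) = c that miss n bijectively onto the
   f with f(m) = c + 1 that miss c, and preserves w. Hence only those f survive in D_c(m) that
   moreover hit a prescribed value: there are at most k n^{k-2} of them, and at most k^3 n^{k-3}
   non-injective ones. So D_c(m) = O(n^{k-2}), its non-injective part is O(n^{k-3}), and the two
   sides differ by O(1/n). *)

section \<open>Counting functions with prescribed values\<close>

lemma card_PiE_determined_le:
  fixes F :: "('a \<Rightarrow> 'b) set"
  assumes F: "F \<subseteq> PiE K (\<lambda>_. N)" and K: "finite K" and N: "finite N" and D: "D \<subseteq> K"
    and determined: "\<And>f g. f \<in> F \<Longrightarrow> g \<in> F \<Longrightarrow> (\<forall>x\<in>K - D. f x = g x) \<Longrightarrow> f = g"
  shows "card N ^ card D * card F \<le> card N ^ card K"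
proof -
  have "inj_on (\<lambda>f. restrict f (K - D)) F"
    using determined by (intro inj_onI) (metis restrict_apply')
  moreover have "(\<lambda>f. restrict f (K - D)) ` F \<subseteq> PiE (K - D) (\<lambda>_. N)"
    using F by (intro image_subsetI) (auto simp: restrict_PiE_iff)
  ultimately have "card F \<le> card (PiE (K - D) (\<lambda>_. N))"
    using K N by (intro card_inj_on_le) (auto simp: finite_PiE)
  also have "\<dots> = card N ^ (card K - card D)"
    using K D by (simp add: card_PiE card_Diff_subset finite_subset)
  finally have "card N ^ card D * card F \<le> card N ^ (card D + (card K - card D))"
    by (simp add: power_add)
  also have "card D + (card K - card D) = card K"
    using K D by (simp add: card_mono)
  finally show ?thesis .
qed

lemma card_PiE_two_values_le:
  assumes K: "finite K" and N: "finite N" and "m \<in> K" "p \<in> K" "c \<noteq> v"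
  shows "card N ^ 2 * card {f \<in> PiE K (\<lambda>_. N). f m = c \<and> f p = v} \<le> card N ^ card K"
proof (cases "m = p")
  case True
  with \<open>c \<noteq> v\<close> have "{f \<in> PiE K (\<lambda>_. N). f m = c \<and> f p = v} = {}"
    by auto
  then show ?thesis by (metis card.empty mult_0_right zero_le)
next
  case False
  let ?F = "{f \<in> PiE K (\<lambda>_. N). f m = c \<and> f p = v}"
  have "card N ^ card {m, p} * card ?F \<le> card N ^ card K"
  proof (rule card_PiE_determined_le)
    fix f g assume "f \<in> ?F" "g \<in> ?F" "\<forall>x\<in>K - {m, p}. f x = g x"
    then show "f = g" by (intro PiE_ext[of f K "\<lambda>_. N"]) auto
  qed (use assms in auto)
  with False show ?thesis by (simp add: power2_eq_square)
qed

lemma card_PiE_two_values_collision_le: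
  assumes K: "finite K" and N: "finite N" and "m \<in> K" "p \<in> K" "c \<noteq> v"
    and "j \<in> K" "j' \<in> K" "j \<noteq> j'"
  shows "card N ^ 3 * card {f \<in> PiE K (\<lambda>_. N). f m = c \<and> f p = v \<and> f j = f j'} \<le> card N ^ card K"
proof -
  let ?F = "{f \<in> PiE K (\<lambda>_. N). f m = c \<and> f p = v \<and> f j = f j'}"
  have unpinned: "card N ^ 3 * card ?F \<le> card N ^ card K"
    if q: "q \<in> K" "q \<notin> {m, p}" "q' \<in> K" "q' \<noteq> q" "\<forall>f\<in>?F. f q = f q'" for q q'
  proof (cases "m = p")
    case True
    with \<open>c \<noteq> v\<close> have "?F = {}" by auto
    then show ?thesis by (metis card.empty mult_0_right zero_le)
  next
    case False
    have "card N ^ card {m, p, q} * card ?F \<le> card N ^ card K"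
    proof (rule card_PiE_determined_le)
      fix f g assume fg: "f \<in> ?F" "g \<in> ?F" and agree: "\<forall>x\<in>K - {m, p, q}. f x = g x"
      have "f q' = g q'"
        using fg agree q by (cases "q' \<in> {m, p}") auto
      moreover have "f q = f q'" "g q = g q'"
        using fg q(5) by blast+
      ultimately have "f q = g q"
        by simp
      then show "f = g"
        using fg agree by (intro PiE_ext[of f K "\<lambda>_. N"]) auto
    qed (use assms q in auto)
    moreover have "card {m, p, q} = 3"
      using False q by auto
    ultimately show ?thesis by simp
  qed
  show ?thesis
  proof (cases "j \<in> {m, p}")
    case True
    show ?thesis
    proof (cases "j' \<in> {m, p}")
      case True
      with \<open>j \<in> {m, p}\<close> \<open>j \<noteq> j'\<close> \<open>c \<noteq> v\<close> have "?F = {}" by auto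
      then show ?thesis by (metis card.empty mult_0_right zero_le)
    qed (use unpinned[of j' j] assms in auto)
  qed (use unpinned[of j j'] assms in auto)
qed

lemma mult_card_le_UN:
  fixes a b :: nat
  assumes I: "finite I" and cover: "F \<subseteq> (\<Union>i\<in>I. S i)"
    and fin: "\<And>i. i \<in> I \<Longrightarrow> finite (S i)" and bound: "\<And>i. i \<in> I \<Longrightarrow> a * card (S i) \<le> b"
  shows "a * card F \<le> card I * b"
proof -
  have "card F \<le> (\<Sum>i\<in>I. card (S i))"
    using card_mono[OF _ cover] card_UN_le[OF I, of S] I fin by fastforce
  then have "a * card F \<le> (\<Sum>i\<in>I. a * card (S i))"
    by (simp add: sum_distrib_left[symmetric])
  also have "\<dots> \<le> card I * b"
    using sum_mono[of I "\<lambda>i. a * card (S i)" "\<lambda>_. b"] bound by simp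
  finally show ?thesis .
qed

lemma card_PiE_hitting_value_le:
  assumes K: "finite K" and N: "finite N" and m: "m \<in> K" and cv: "c \<noteq> v"
  shows "card N ^ 2 * card {f \<in> PiE K (\<lambda>_. N). f m = c \<and> v \<in> f ` K} \<le> card K * card N ^ card K"
proof (rule mult_card_le_UN[OF K, where S = "\<lambda>p. {f \<in> PiE K (\<lambda>_. N). f m = c \<and> f p = v}"])
  show "{f \<in> PiE K (\<lambda>_. N). f m = c \<and> v \<in> f ` K} \<subseteq> (\<Union>p\<in>K. {f \<in> PiE K (\<lambda>_. N). f m = c \<and> f p = v})"
    by blast
  show "finite {f \<in> PiE K (\<lambda>_. N). f m = c \<and> f p = v}" for p
    using K N by (simp add: finite_PiE)
  show "card N ^ 2 * card {f \<in> PiE K (\<lambda>_. N). f m = c \<and> f p = v} \<le> card N ^ card K" if "p \<in> K" for p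
    using card_PiE_two_values_le[OF K N m that cv] .
qed

lemma card_PiE_noninj_hitting_value_le:
  assumes K: "finite K" and N: "finite N" and m: "m \<in> K" and cv: "c \<noteq> v"
  shows "card N ^ 3 * card {f \<in> PiE K (\<lambda>_. N). \<not> inj_on f K \<and> f m = c \<and> v \<in> f ` K}
    \<le> card K ^ 3 * card N ^ card K"
proof -
  define I where "I = {(p, j, j'). p \<in> K \<and> j \<in> K \<and> j' \<in> K \<and> j \<noteq> j'}"
  define S where "S = (\<lambda>(p, j, j'). {f \<in> PiE K (\<lambda>_. N). f m = c \<and> f p = v \<and> f j = f j'})"
  have I: "I \<subseteq> K \<times> K \<times> K"
    by (auto simp: I_def)
  have "card N ^ 3 * card {f \<in> PiE K (\<lambda>_. N). \<not> inj_on f K \<and> f m = c \<and> v \<in> f ` K}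
      \<le> card I * card N ^ card K"
  proof (rule mult_card_le_UN)
    show "finite I"
      using K I by (simp add: finite_subset)
    show "{f \<in> PiE K (\<lambda>_. N). \<not> inj_on f K \<and> f m = c \<and> v \<in> f ` K} \<subseteq> (\<Union>i\<in>I. S i)"
      by (auto simp: I_def S_def inj_on_def)
    show "finite (S i)" for i
      using K N by (auto simp: S_def finite_PiE split: prod.split)
    show "card N ^ 3 * card (S i) \<le> card N ^ card K" if "i \<in> I" for i
      using that card_PiE_two_values_collision_le[OF K N m _ cv] by (auto simp: I_def S_def)
  qed
  also have "card I \<le> card (K \<times> K \<times> K)"
    using K I by (intro card_mono) auto
  then have "card I * card N ^ card K \<le> card K ^ 3 * card N ^ card K"
    by (simp add: card_cartesian_product power3_eq_cube)
  finally show ?thesis .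
qed

section \<open>Shifting the values of non-decreasing functions\<close>

definition bump :: "nat \<Rightarrow> nat \<Rightarrow> nat" where
  "bump c x = (if c \<le> x then Suc x else x)"

definition unbump :: "nat \<Rightarrow> nat \<Rightarrow> nat" where
  "unbump c y = (if c < y then y - 1 else y)"

definition bump_fun :: "nat \<Rightarrow> nat \<Rightarrow> (nat \<Rightarrow> nat) \<Rightarrow> nat \<Rightarrow> nat" where
  "bump_fun k c f = restrict (\<lambda>j. bump c (f j)) {1..k}"

definition unbump_fun :: "nat \<Rightarrow> nat \<Rightarrow> (nat \<Rightarrow> nat) \<Rightarrow> nat \<Rightarrow> nat" where
  "unbump_fun k c f = restrict (\<lambda>j. unbump c (f j)) {1..k}"

lemma inj_bump: "inj (bump c)"
  by (auto simp: inj_def bump_def split: if_splits)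

lemma finite_nondec_funs: "finite (nondec_funs k n)"
  by (rule finite_subset[of _ "PiE {1..k} (\<lambda>_. {1..n})"]) (auto simp: nondec_funs_def finite_PiE)

lemma nondec_funs_subset_PiE: "nondec_funs k n \<subseteq> PiE {1..k} (\<lambda>_. {1..n})"
  by (auto simp: nondec_funs_def)

lemma bump_fun_in_PiE:
  assumes "f \<in> PiE {1..k} (\<lambda>_. {1..n})" and "n \<notin> f ` {1..k}"
  shows "bump_fun k c f \<in> PiE {1..k} (\<lambda>_. {1..n})"
proof -
  have "f j \<in> {1..<n}" if "j \<in> {1..k}" for j
  proof -
    have "f j \<in> {1..n}" "f j \<noteq> n"
      using assms that by (auto simp: PiE_iff)
    then show ?thesis by auto
  qed
  then show ?thesis
    by (fastforce simp: bump_fun_def bump_def)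
qed

lemma bump_fun_in_nondec_funs:
  assumes f: "f \<in> nondec_funs k n" and "n \<notin> f ` {1..k}"
  shows "bump_fun k c f \<in> nondec_funs k n" "c \<notin> bump_fun k c f ` {1..k}"
proof -
  have "bump_fun k c f \<in> PiE {1..k} (\<lambda>_. {1..n})"
    using assms by (intro bump_fun_in_PiE) (auto simp: nondec_funs_def)
  moreover have "mono_on {1..k} (bump_fun k c f)"
  proof (rule mono_onI)
    fix r s assume "r \<in> {1..k}" "s \<in> {1..k}" "r \<le> s"
    moreover from this have "f r \<le> f s"
      using f by (simp add: nondec_funs_def mono_on_def)
    ultimately show "bump_fun k c f r \<le> bump_fun k c f s"
      by (simp add: bump_fun_def bump_def)
  qed
  ultimately show "bump_fun k c f \<in> nondec_funs k n"
    by (simp add: nondec_funs_def)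
  show "c \<notin> bump_fun k c f ` {1..k}"
    by (auto simp: bump_fun_def bump_def)
qed

lemma unbump_fun_in_nondec_funs:
  assumes f: "f \<in> nondec_funs k n" and "c \<notin> f ` {1..k}" and "1 \<le> c" "c < n"
  shows "unbump_fun k c f \<in> nondec_funs k n" "n \<notin> unbump_fun k c f ` {1..k}"
proof -
  have fj: "f j \<in> {1..n}" "f j \<noteq> c" if "j \<in> {1..k}" for j
    using assms that by (auto simp: nondec_funs_def)
  then have "unbump_fun k c f \<in> PiE {1..k} (\<lambda>_. {1..n})"
    using \<open>1 \<le> c\<close> by (force simp: unbump_fun_def unbump_def)
  moreover have "mono_on {1..k} (unbump_fun k c f)"
  proof (rule mono_onI)
    fix r s assume "r \<in> {1..k}" "s \<in> {1..k}" "r \<le> s"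
    moreover from this have "f r \<le> f s"
      using f by (simp add: nondec_funs_def mono_on_def)
    ultimately show "unbump_fun k c f r \<le> unbump_fun k c f s"
      by (simp add: unbump_fun_def unbump_def) arith
  qed
  ultimately show "unbump_fun k c f \<in> nondec_funs k n"
    by (simp add: nondec_funs_def)
  show "n \<notin> unbump_fun k c f ` {1..k}"
  proof
    assume "n \<in> unbump_fun k c f ` {1..k}"
    then obtain j where "j \<in> {1..k}" "unbump c (f j) = n"
      by (auto simp: unbump_fun_def)
    moreover from fj[OF \<open>j \<in> {1..k}\<close>] have "unbump c (f j) < n"
      using \<open>c < n\<close> by (auto simp: unbump_def)
    ultimately show False by simp
  qed
qed

lemma bij_betw_bump_fun:
  assumes "1 \<le> c" "c < n" "m \<in> {1..k}"
  shows "bij_betw (bump_fun k c)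
     {f \<in> nondec_funs k n. f m = c \<and> n \<notin> f ` {1..k}}
     {f \<in> nondec_funs k n. f m = Suc c \<and> c \<notin> f ` {1..k}}"
proof (rule bij_betw_byWitness[where f' = "unbump_fun k c"])
  show "\<forall>f\<in>{f \<in> nondec_funs k n. f m = c \<and> n \<notin> f ` {1..k}}. unbump_fun k c (bump_fun k c f) = f"
    by (auto simp: nondec_funs_def PiE_iff unbump_fun_def bump_fun_def unbump_def bump_def
        intro!: extensionalityI[of _ "{1..k}"])
  show "\<forall>f\<in>{f \<in> nondec_funs k n. f m = Suc c \<and> c \<notin> f ` {1..k}}. bump_fun k c (unbump_fun k c f) = f"
    by (auto simp: nondec_funs_def PiE_iff unbump_fun_def bump_fun_def unbump_def bump_def
        intro!: extensionalityI[of _ "{1..k}"])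
  show "bump_fun k c ` {f \<in> nondec_funs k n. f m = c \<and> n \<notin> f ` {1..k}}
      \<subseteq> {f \<in> nondec_funs k n. f m = Suc c \<and> c \<notin> f ` {1..k}}"
  proof (rule image_subsetI)
    fix f assume f: "f \<in> {f \<in> nondec_funs k n. f m = c \<and> n \<notin> f ` {1..k}}"
    moreover have "bump_fun k c f m = Suc c"
      using f assms by (simp add: bump_fun_def bump_def)
    ultimately show "bump_fun k c f \<in> {f \<in> nondec_funs k n. f m = Suc c \<and> c \<notin> f ` {1..k}}"
      using bump_fun_in_nondec_funs[of f k n c] by blast
  qed
  show "unbump_fun k c ` {f \<in> nondec_funs k n. f m = Suc c \<and> c \<notin> f ` {1..k}}
      \<subseteq> {f \<in> nondec_funs k n. f m = c \<and> n \<notin> f ` {1..k}}"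
  proof (rule image_subsetI)
    fix f assume f: "f \<in> {f \<in> nondec_funs k n. f m = Suc c \<and> c \<notin> f ` {1..k}}"
    moreover have "unbump_fun k c f m = c"
      using f assms by (simp add: unbump_fun_def unbump_def)
    ultimately show "unbump_fun k c f \<in> {f \<in> nondec_funs k n. f m = c \<and> n \<notin> f ` {1..k}}"
      using unbump_fun_in_nondec_funs[of f k n c] assms by blast
  qed
qed

definition unit_diff :: "nat \<Rightarrow> nat \<Rightarrow> real" where
  "unit_diff c x = (if x = c then 1 else if x = Suc c then -1 else 0)"

definition diff_sum :: "nat \<Rightarrow> nat \<Rightarrow> ((nat \<Rightarrow> nat) \<Rightarrow> real) \<Rightarrow> nat \<Rightarrow> nat \<Rightarrow> real" where
  "diff_sum k n \<psi> c m = (\<Sum>f\<in>nondec_funs k n. \<psi> f * unit_diff c (f m))"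

lemma diff_sum_telescope:
  assumes "1 \<le> c" "c < n" "m \<in> {1..k}"
    and invariant: "\<And>f. f \<in> nondec_funs k n \<Longrightarrow> n \<notin> f ` {1..k} \<Longrightarrow> \<psi> (bump_fun k c f) = \<psi> f"
  shows "diff_sum k n \<psi> c m =
    sum \<psi> {f \<in> nondec_funs k n. f m = c \<and> n \<in> f ` {1..k}} -
    sum \<psi> {f \<in> nondec_funs k n. f m = Suc c \<and> c \<in> f ` {1..k}}"
proof -
  let ?ND = "nondec_funs k n"
  have split: "sum \<psi> {f \<in> ?ND. f m = d} =
      sum \<psi> {f \<in> ?ND. f m = d \<and> v \<in> f ` {1..k}} + sum \<psi> {f \<in> ?ND. f m = d \<and> v \<notin> f ` {1..k}}"
    for d v
    using finite_nondec_funs[of k n]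
    by (subst sum.union_disjoint[symmetric]) (auto intro: sum.cong)
  have "diff_sum k n \<psi> c m = sum \<psi> {f \<in> ?ND. f m = c} - sum \<psi> {f \<in> ?ND. f m = Suc c}"
    using finite_nondec_funs[of k n]
    by (simp add: diff_sum_def unit_diff_def sum.inter_filter if_distrib[of "(*) _"]
        flip: sum_subtractf) (auto intro: sum.cong)
  moreover have "sum \<psi> {f \<in> ?ND. f m = c \<and> n \<notin> f ` {1..k}} =
      sum \<psi> {f \<in> ?ND. f m = Suc c \<and> c \<notin> f ` {1..k}}"
    using sum.reindex_bij_betw[OF bij_betw_bump_fun[OF assms(1-3)], of \<psi>] invariant by simp
  ultimately show ?thesis
    using split[of c n] split[of "Suc c" c] by simp
qed

lemma abs_diff_sum_le:
  assumes c: "1 \<le> c" "c < n" and m: "m \<in> {1..k}"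
    and invariant: "\<And>f. f \<in> nondec_funs k n \<Longrightarrow> n \<notin> f ` {1..k} \<Longrightarrow> \<psi> (bump_fun k c f) = \<psi> f"
    and nonneg: "\<And>f. 0 \<le> \<psi> f" and le_indicator: "\<And>f. \<psi> f \<le> of_bool (P f)"
    and count: "\<And>d v. d \<noteq> v \<Longrightarrow>
      n ^ e * card {f \<in> PiE {1..k} (\<lambda>_. {1..n}). P f \<and> f m = d \<and> v \<in> f ` {1..k}} \<le> M"
  shows "real n ^ e * \<bar>diff_sum k n \<psi> c m\<bar> \<le> 2 * real M"
proof -
  let ?S = "\<lambda>d v. sum \<psi> {f \<in> nondec_funs k n. f m = d \<and> v \<in> f ` {1..k}}"
  let ?C = "\<lambda>d v. card {f \<in> PiE {1..k} (\<lambda>_. {1..n}). P f \<and> f m = d \<and> v \<in> f ` {1..k}}"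
  have le_card: "?S d v \<le> ?C d v" for d v
  proof -
    have "?S d v \<le> (\<Sum>f\<in>{f \<in> nondec_funs k n. f m = d \<and> v \<in> f ` {1..k}}. of_bool (P f))"
      by (rule sum_mono) (rule le_indicator)
    also have "\<dots> = card {f \<in> nondec_funs k n. (f m = d \<and> v \<in> f ` {1..k}) \<and> P f}"
      using finite_nondec_funs[of k n] by (simp add: sum.inter_filter[symmetric] of_bool_def)
    also have "\<dots> \<le> ?C d v"
      using nondec_funs_subset_PiE[of k n] by (intro of_nat_mono card_mono) (auto simp: finite_PiE)
    finally show ?thesis .
  qed
  have S_nonneg: "0 \<le> ?S d v" for d v
    using nonneg by (simp add: sum_nonneg)
  have abs_diff_le: "\<bar>x - y\<bar> \<le> X + Y" if "0 \<le> x" "x \<le> X" "0 \<le> y" "y \<le> Y" for x y X Y :: real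
    using that by linarith
  have "diff_sum k n \<psi> c m = ?S c n - ?S (Suc c) c"
    by (rule diff_sum_telescope[OF c m]) (rule invariant)
  then have "\<bar>diff_sum k n \<psi> c m\<bar> \<le> real (?C c n) + real (?C (Suc c) c)"
    by (simp only: abs_diff_le[OF S_nonneg le_card S_nonneg le_card])
  then have "real n ^ e * \<bar>diff_sum k n \<psi> c m\<bar> \<le> real n ^ e * (real (?C c n) + real (?C (Suc c) c))"
    by (rule mult_left_mono) simp
  also have "\<dots> = real (n ^ e * ?C c n + n ^ e * ?C (Suc c) c)"
    by (simp add: distrib_left)
  also have "\<dots> \<le> real (M + M)"
    using c by (intro of_nat_mono add_mono count) auto
  finally show ?thesis
    by simp
qed

section \<open>Multiplicity weights\<close>

definition fiber_fact :: "nat \<Rightarrow> nat \<Rightarrow> (nat \<Rightarrow> nat) \<Rightarrow> real" where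
  "fiber_fact k n f = (\<Prod>i\<in>{1..n}. fact (card {m \<in> {1..k}. f m = i}))"

lemma fiber_fact_ge_1: "1 \<le> fiber_fact k n f"
  unfolding fiber_fact_def by (rule prod_ge_1) (simp add: fact_ge_1)

lemma fiber_fact_inj:
  assumes "inj_on f {1..k}"
  shows "fiber_fact k n f = 1"
proof -
  have "card {m \<in> {1..k}. f m = i} \<le> 1" for i
  proof -
    have "\<forall>a\<in>{m \<in> {1..k}. f m = i}. \<forall>b\<in>{m \<in> {1..k}. f m = i}. a = b"
      using assms by (auto dest: inj_onD)
    then show ?thesis
      by (simp add: card_le_Suc0_iff_eq)
  qed
  moreover have "fact x = (1 :: real)" if "x \<le> 1" for x :: nat
    using that by (cases x) auto
  ultimately show ?thesis
    by (simp add: fiber_fact_def)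
qed

lemma fiber_fact_eq_prod_image:
  assumes "f ` {1..k} \<subseteq> {1..n}"
  shows "fiber_fact k n f = (\<Prod>i\<in>f ` {1..k}. fact (card {m \<in> {1..k}. f m = i}))"
  unfolding fiber_fact_def
proof (rule prod.mono_neutral_right)
  show "\<forall>i\<in>{1..n} - f ` {1..k}. fact (card {m \<in> {1..k}. f m = i}) = (1 :: real)"
  proof
    fix i assume "i \<in> {1..n} - f ` {1..k}"
    then have "{m \<in> {1..k}. f m = i} = {}"
      by auto
    then show "fact (card {m \<in> {1..k}. f m = i}) = (1 :: real)"
      by (metis card.empty fact_0)
  qed
qed (use assms in auto)

lemma fiber_fact_bump_fun:
  assumes f: "f \<in> PiE {1..k} (\<lambda>_. {1..n})" and "n \<notin> f ` {1..k}"
  shows "fiber_fact k n (bump_fun k c f) = fiber_fact k n f"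
proof -
  have image: "bump_fun k c f ` {1..k} = bump c ` f ` {1..k}"
    by (auto simp: bump_fun_def)
  have "bump_fun k c f ` {1..k} \<subseteq> {1..n}"
    using bump_fun_in_PiE[OF assms] by (auto simp: PiE_iff)
  then have "fiber_fact k n (bump_fun k c f) =
      (\<Prod>i\<in>bump c ` f ` {1..k}. fact (card {m \<in> {1..k}. bump_fun k c f m = i}))"
    unfolding image[symmetric] by (rule fiber_fact_eq_prod_image)
  also have "\<dots> = (\<Prod>x\<in>f ` {1..k}. fact (card {m \<in> {1..k}. bump_fun k c f m = bump c x}))"
    by (subst prod.reindex) (simp_all add: inj_on_subset[OF inj_bump])
  also have "\<dots> = (\<Prod>x\<in>f ` {1..k}. fact (card {m \<in> {1..k}. f m = x}))"
    by (intro prod.cong refl arg_cong[where f = "\<lambda>S. fact (card S)"])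
      (auto simp: bump_fun_def bump_def split: if_splits)
  also have "\<dots> = fiber_fact k n f"
    using f by (simp add: fiber_fact_eq_prod_image PiE_iff image_subset_iff)
  finally show ?thesis .
qed

lemma inj_on_bump_fun_iff: "inj_on (bump_fun k c f) {1..k} \<longleftrightarrow> inj_on f {1..k}"
  by (simp add: inj_on_def bump_fun_def inj_eq[OF inj_bump])

definition inj_weight :: "nat \<Rightarrow> (nat \<Rightarrow> nat) \<Rightarrow> real" where
  "inj_weight k f = of_bool (inj_on f {1..k})"

definition collision_weight :: "nat \<Rightarrow> nat \<Rightarrow> (nat \<Rightarrow> nat) \<Rightarrow> real" where
  "collision_weight k n f = of_bool (\<not> inj_on f {1..k}) / fiber_fact k n f"

lemma inverse_fiber_fact_eq: "1 / fiber_fact k n f = inj_weight k f + collision_weight k n f"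
  by (simp add: inj_weight_def collision_weight_def fiber_fact_inj)

lemma abs_diff_sum_inj_weight_le:
  assumes c: "1 \<le> c" "c < n" and m: "m \<in> {1..k}"
  shows "real n ^ 2 * \<bar>diff_sum k n (inj_weight k) c m\<bar> \<le> 2 * real k * real n ^ k"
proof -
  have "real n ^ 2 * \<bar>diff_sum k n (inj_weight k) c m\<bar> \<le> 2 * real (k * n ^ k)"
  proof (rule abs_diff_sum_le[OF c m, where P = "\<lambda>_. True"])
    show "inj_weight k (bump_fun k c f) = inj_weight k f" for f
      by (simp only: inj_weight_def inj_on_bump_fun_iff)
    show "n ^ 2 * card {f \<in> PiE {1..k} (\<lambda>_. {1..n}). True \<and> f m = d \<and> v \<in> f ` {1..k}} \<le> k * n ^ k"
      if "d \<noteq> v" for d v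
      using card_PiE_hitting_value_le[of "{1..k}" "{1..n}" m d v] m that by simp
  qed (simp_all add: inj_weight_def)
  then show ?thesis
    by simp
qed

lemma abs_diff_sum_collision_weight_le:
  assumes c: "1 \<le> c" "c < n" and m: "m \<in> {1..k}"
  shows "real n ^ 3 * \<bar>diff_sum k n (collision_weight k n) c m\<bar> \<le> 2 * real k ^ 3 * real n ^ k"
proof -
  have "real n ^ 3 * \<bar>diff_sum k n (collision_weight k n) c m\<bar> \<le> 2 * real (k ^ 3 * n ^ k)"
  proof (rule abs_diff_sum_le[OF c m, where P = "\<lambda>f. \<not> inj_on f {1..k}"])
    fix f assume "f \<in> nondec_funs k n" "n \<notin> f ` {1..k}"
    then have "fiber_fact k n (bump_fun k c f) = fiber_fact k n f"
      using nondec_funs_subset_PiE by (blast intro: fiber_fact_bump_fun)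
    then show "collision_weight k n (bump_fun k c f) = collision_weight k n f"
      by (simp only: collision_weight_def inj_on_bump_fun_iff)
  next
    show "0 \<le> collision_weight k n f" "collision_weight k n f \<le> of_bool (\<not> inj_on f {1..k})" for f
      using fiber_fact_ge_1[of k n f] by (simp_all add: collision_weight_def)
    show "n ^ 3 * card {f \<in> PiE {1..k} (\<lambda>_. {1..n}). \<not> inj_on f {1..k} \<and> f m = d \<and> v \<in> f ` {1..k}}
        \<le> k ^ 3 * n ^ k" if "d \<noteq> v" for d v
      using card_PiE_noninj_hitting_value_le[of "{1..k}" "{1..n}" m d v] m that by simp
  qed
  then show ?thesis
    by simp
qed

section \<open>The derivative at the origin\<close>

lemma Bmat_eq_unit_diff: "Bmat a b i j = unit_diff a i * unit_diff b j"
  by (auto simp: Bmat_def unit_diff_def)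

lemma Jx_single_entry:
  assumes "a \<in> {1..n-1}" "b \<in> {1..n-1}"
  shows "Jx n (\<lambda>i j. if i = a \<and> j = b then t else 0) i j = 1 / real n + t * Bmat a b i j"
proof -
  have "(\<Sum>b'\<in>{1..n-1}. (if a' = a \<and> b' = b then t else 0) * Bmat a' b' i j) =
      (if a' = a then t * Bmat a b i j else 0)" for a'
  proof -
    have "(\<Sum>b'\<in>{1..n-1}. (if a' = a \<and> b' = b then t else 0) * Bmat a' b' i j) =
        (\<Sum>b'\<in>{1..n-1}. if b' = b then (if a' = a then t * Bmat a b i j else 0) else 0)"
      by (rule sum.cong) auto
    then show ?thesis
      using assms(2) by (simp add: sum.delta')
  qed
  then show ?thesis
    using assms(1) by (simp add: Jx_def sum.delta')
qed

lemma dh0_eq: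
  assumes "a \<in> {1..n-1}" "b \<in> {1..n-1}"
  shows "dh0 \<pi> k n a b = fact k / real n ^ k * (1 / real n) ^ (k - 1) *
    (\<Sum>f\<in>nondec_funs k n. \<Sum>g\<in>nondec_funs k n.
      (\<Sum>m\<in>{1..k}. Bmat a b (f m) (g (\<pi> m))) / (fiber_fact k n f * fiber_fact k n g))"
proof -
  let ?B = "\<lambda>f g m. Bmat a b (f m) (g (\<pi> m))"
  have prod_deriv: "((\<lambda>t. \<Prod>m\<in>{1..k}. 1 / real n + t * ?B f g m) has_field_derivative
      (\<Sum>m\<in>{1..k}. ?B f g m * (1 / real n) ^ (k - 1))) (at 0)" for f g
  proof -
    have "((\<lambda>t. \<Prod>m\<in>{1..k}. 1 / real n + t * ?B f g m) has_field_derivative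
        (\<Sum>m\<in>{1..k}. ?B f g m * (\<Prod>y\<in>{1..k} - {m}. 1 / real n + 0 * ?B f g y))) (at 0)"
      by (rule has_field_derivative_prod) (auto intro!: derivative_eq_intros)
    moreover have "(\<Prod>y\<in>{1..k} - {m}. 1 / real n + 0 * ?B f g y) = (1 / real n) ^ (k - 1)"
      if "m \<in> {1..k}" for m
      using that by (simp add: card_Diff_singleton)
    ultimately show ?thesis
      by (metis (no_types, lifting) sum.cong)
  qed
  have "(\<lambda>t. hdens \<pi> k n (\<lambda>i j. if i = a \<and> j = b then t else 0)) =
      (\<lambda>t. fact k / real n ^ k * (\<Sum>f\<in>nondec_funs k n. \<Sum>g\<in>nondec_funs k n.
        1 / (fiber_fact k n f * fiber_fact k n g) * (\<Prod>m\<in>{1..k}. 1 / real n + t * ?B f g m)))"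
    by (simp add: hdens_def Jx_single_entry[OF assms] fiber_fact_def prod.distrib)
  moreover have "((\<lambda>t. fact k / real n ^ k * (\<Sum>f\<in>nondec_funs k n. \<Sum>g\<in>nondec_funs k n.
        1 / (fiber_fact k n f * fiber_fact k n g) * (\<Prod>m\<in>{1..k}. 1 / real n + t * ?B f g m)))
      has_field_derivative
      fact k / real n ^ k * (\<Sum>f\<in>nondec_funs k n. \<Sum>g\<in>nondec_funs k n.
        1 / (fiber_fact k n f * fiber_fact k n g) * (\<Sum>m\<in>{1..k}. ?B f g m * (1 / real n) ^ (k - 1))))
      (at 0)"
    by (intro DERIV_cmult DERIV_sum prod_deriv)
  ultimately show ?thesis
    unfolding dh0_def
    by (simp add: DERIV_imp_deriv sum_distrib_left sum_distrib_right mult_ac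
        flip: sum_divide_distrib)
qed

lemma sum_Bmat_factorizes:
  "(\<Sum>f\<in>A. \<Sum>g\<in>A. \<phi> f * \<psi> g * (\<Sum>m\<in>M. Bmat a b (f m) (g (\<pi> m)))) =
    (\<Sum>m\<in>M. (\<Sum>f\<in>A. \<phi> f * unit_diff a (f m)) * (\<Sum>g\<in>A. \<psi> g * unit_diff b (g (\<pi> m))))"
proof -
  have "(\<Sum>f\<in>A. \<Sum>g\<in>A. \<phi> f * \<psi> g * (\<Sum>m\<in>M. Bmat a b (f m) (g (\<pi> m)))) =
      (\<Sum>f\<in>A. \<Sum>m\<in>M. \<Sum>g\<in>A. (\<phi> f * unit_diff a (f m)) * (\<psi> g * unit_diff b (g (\<pi> m))))"
    by (simp add: Bmat_eq_unit_diff sum_distrib_left sum.swap[of _ M] mult_ac)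
  also have "\<dots> = (\<Sum>m\<in>M. (\<Sum>f\<in>A. \<phi> f * unit_diff a (f m)) * (\<Sum>g\<in>A. \<psi> g * unit_diff b (g (\<pi> m))))"
    by (simp add: sum_product sum.swap[of _ A M])
  finally show ?thesis .
qed

lemma scaled_dh0_eq:
  assumes "a \<in> {1..n-1}" "b \<in> {1..n-1}"
  shows "real n ^ 3 * dh0 \<pi> k n a b = fact k * real n ^ 4 / real n ^ (2 * k) *
    (\<Sum>m\<in>{1..k}. diff_sum k n (\<lambda>f. 1 / fiber_fact k n f) a m *
      diff_sum k n (\<lambda>f. 1 / fiber_fact k n f) b (\<pi> m))"
proof (cases "k = 0")
  case False
  have "n > 0"
    using assms by auto
  with False have scale:
    "real n ^ 3 * (fact k / real n ^ k * (1 / real n) ^ (k - 1)) = fact k * real n ^ 4 / real n ^ (2 * k)"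
    by (simp add: power_one_over field_simps flip: power_add)
  have factorized: "(\<Sum>f\<in>nondec_funs k n. \<Sum>g\<in>nondec_funs k n.
      (\<Sum>m\<in>{1..k}. Bmat a b (f m) (g (\<pi> m))) / (fiber_fact k n f * fiber_fact k n g)) =
    (\<Sum>m\<in>{1..k}. diff_sum k n (\<lambda>f. 1 / fiber_fact k n f) a m *
      diff_sum k n (\<lambda>f. 1 / fiber_fact k n f) b (\<pi> m))"
    unfolding diff_sum_def sum_Bmat_factorizes[symmetric] by (simp add: field_simps)
  show ?thesis
    unfolding dh0_eq[OF assms] factorized scale[symmetric] by (simp only: mult.assoc)
qed (simp add: dh0_eq[OF assms])

lemma strinc_funs_eq: "strinc_funs k n = {f \<in> nondec_funs k n. inj_on f {1..k}}"
  by (auto simp: strinc_funs_def nondec_funs_def strict_mono_iff_mono)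

lemma sum_strinc_funs_Bmat_eq:
  "(\<Sum>f\<in>strinc_funs k n. \<Sum>g\<in>strinc_funs k n. \<Sum>m\<in>{1..k}. Bmat a b (f m) (g (\<pi> m))) =
    (\<Sum>m\<in>{1..k}. diff_sum k n (inj_weight k) a m * diff_sum k n (inj_weight k) b (\<pi> m))"
proof -
  have restrict_to_inj: "(\<Sum>f\<in>strinc_funs k n. h f) = (\<Sum>f\<in>nondec_funs k n. inj_weight k f * h f)"
    for h :: "(nat \<Rightarrow> nat) \<Rightarrow> real"
  proof -
    have "(\<Sum>f\<in>nondec_funs k n. inj_weight k f * h f) =
        (\<Sum>f\<in>nondec_funs k n. if inj_on f {1..k} then h f else 0)"
      by (rule sum.cong) (simp_all add: inj_weight_def)
    also have "\<dots> = sum h {f \<in> nondec_funs k n. inj_on f {1..k}}"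
      by (rule sum.inter_filter[OF finite_nondec_funs, symmetric])
    finally show ?thesis
      unfolding strinc_funs_eq by (rule sym)
  qed
  show ?thesis
    unfolding diff_sum_def sum_Bmat_factorizes[symmetric] restrict_to_inj
    by (simp add: sum_distrib_left mult_ac)
qed

section \<open>Comparison of the two sequences\<close>

lemma fact_divide_powi_eq:
  assumes "n > 0"
  shows "fact k / (real n powi (2 * int k - 4)) = fact k * real n ^ 4 / real n ^ (2 * k)"
proof -
  have "real n powi (2 * int k - 4) = real n powi int (2 * k) / real n powi 4"
    using assms by (simp add: power_int_diff)
  then have "real n powi (2 * int k - 4) = real n ^ (2 * k) / real n ^ 4"
    by (simp only: power_int_of_nat power_int_numeral)
  then show ?thesis
    using assms by simp
qed

lemma diff_sum_add: "diff_sum k n (\<lambda>f. \<phi> f + \<psi> f) c m = diff_sum k n \<phi> c m + diff_sum k n \<psi> c m"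
  by (simp add: diff_sum_def distrib_right sum.distrib)

lemma abs_perturbed_product_le:
  fixes x x' y y' N A B P :: real
  assumes "1 \<le> N" "0 \<le> A" "0 \<le> B" "0 \<le> P"
    and x: "N ^ 2 * \<bar>x\<bar> \<le> A * P" and x': "N ^ 3 * \<bar>x'\<bar> \<le> B * P"
    and y: "N ^ 2 * \<bar>y\<bar> \<le> A * P" and y': "N ^ 3 * \<bar>y'\<bar> \<le> B * P"
  shows "N ^ 5 * \<bar>(x + x') * (y + y') - x * y\<bar> \<le> (2 * A * B + B ^ 2) * P ^ 2"
proof -
  have N: "N ^ 5 = N ^ 2 * N ^ 3" "N ^ 6 = N ^ 3 * N ^ 3"
    by (simp_all flip: power_add)
  have "N ^ 5 * \<bar>x * y'\<bar> = (N ^ 2 * \<bar>x\<bar>) * (N ^ 3 * \<bar>y'\<bar>)"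
    by (simp only: N abs_mult mult_ac)
  also have "\<dots> \<le> (A * P) * (B * P)"
    using assms by (intro mult_mono[OF x y']) auto
  finally have xy': "N ^ 5 * \<bar>x * y'\<bar> \<le> A * B * P ^ 2"
    by (simp add: power2_eq_square mult_ac)
  have "N ^ 5 * \<bar>x' * y\<bar> = (N ^ 3 * \<bar>x'\<bar>) * (N ^ 2 * \<bar>y\<bar>)"
    by (simp only: N abs_mult mult_ac)
  also have "\<dots> \<le> (B * P) * (A * P)"
    using assms by (intro mult_mono[OF x' y]) auto
  finally have x'y: "N ^ 5 * \<bar>x' * y\<bar> \<le> A * B * P ^ 2"
    by (simp add: power2_eq_square mult_ac)
  have "N ^ 5 * \<bar>x' * y'\<bar> \<le> N ^ 6 * \<bar>x' * y'\<bar>"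
    using \<open>1 \<le> N\<close> by (intro mult_right_mono power_increasing) auto
  also have "\<dots> = (N ^ 3 * \<bar>x'\<bar>) * (N ^ 3 * \<bar>y'\<bar>)"
    by (simp only: N abs_mult mult_ac)
  also have "\<dots> \<le> (B * P) * (B * P)"
    using assms by (intro mult_mono[OF x' y']) auto
  finally have x'y': "N ^ 5 * \<bar>x' * y'\<bar> \<le> B ^ 2 * P ^ 2"
    by (simp add: power2_eq_square mult_ac)
  have "(x + x') * (y + y') - x * y = x * y' + x' * y + x' * y'"
    by (simp add: algebra_simps)
  then have "\<bar>(x + x') * (y + y') - x * y\<bar> \<le> \<bar>x * y'\<bar> + \<bar>x' * y\<bar> + \<bar>x' * y'\<bar>"
    using abs_triangle_ineq[of "x * y' + x' * y" "x' * y'"] abs_triangle_ineq[of "x * y'" "x' * y"]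
    by simp
  then have "N ^ 5 * \<bar>(x + x') * (y + y') - x * y\<bar> \<le>
      N ^ 5 * \<bar>x * y'\<bar> + N ^ 5 * \<bar>x' * y\<bar> + N ^ 5 * \<bar>x' * y'\<bar>"
    using \<open>1 \<le> N\<close> by (simp add: mult_left_mono flip: distrib_left)
  moreover have "(2 * A * B + B ^ 2) * P ^ 2 = A * B * P ^ 2 + A * B * P ^ 2 + B ^ 2 * P ^ 2"
    by (simp add: algebra_simps)
  ultimately show ?thesis
    using xy' x'y x'y' by linarith
qed

lemma scaled_dh0_minus_strinc_sum_eq:
  assumes "a \<in> {1..n-1}" "b \<in> {1..n-1}"
  shows "real n ^ 3 * dh0 \<pi> k n a b - fact k / (real n powi (2 * int k - 4)) *
      (\<Sum>f\<in>strinc_funs k n. \<Sum>g\<in>strinc_funs k n. \<Sum>m\<in>{1..k}. Bmat a b (f m) (g (\<pi> m))) =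
    fact k * real n ^ 4 / real n ^ (2 * k) *
      (\<Sum>m\<in>{1..k}.
        (diff_sum k n (inj_weight k) a m + diff_sum k n (collision_weight k n) a m) *
        (diff_sum k n (inj_weight k) b (\<pi> m) + diff_sum k n (collision_weight k n) b (\<pi> m)) -
        diff_sum k n (inj_weight k) a m * diff_sum k n (inj_weight k) b (\<pi> m))"
proof -
  have "n > 0"
    using assms by auto
  then show ?thesis
    unfolding scaled_dh0_eq[OF assms] fact_divide_powi_eq[OF \<open>n > 0\<close>] sum_strinc_funs_Bmat_eq
      inverse_fiber_fact_eq diff_sum_add
    by (simp add: sum_subtractf right_diff_distrib)
qed

lemma abs_scaled_dh0_minus_strinc_sum_le:
  assumes \<pi>: "bij_betw \<pi> {1..k} {1..k}" and ab: "a \<in> {1..n-1}" "b \<in> {1..n-1}"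
  shows "\<bar>real n ^ 3 * dh0 \<pi> k n a b - fact k / (real n powi (2 * int k - 4)) *
      (\<Sum>f\<in>strinc_funs k n. \<Sum>g\<in>strinc_funs k n. \<Sum>m\<in>{1..k}. Bmat a b (f m) (g (\<pi> m)))\<bar>
    \<le> fact k * real k * (8 * real k ^ 4 + 4 * real k ^ 6) / real n"
proof -
  define \<kappa> where "\<kappa> = fact k * real n ^ 4 / real n ^ (2 * k)"
  define C where "C = 8 * real k ^ 4 + 4 * real k ^ 6"
  define D where "D c m = diff_sum k n (inj_weight k) c m" for c m
  define E where "E c m = diff_sum k n (collision_weight k n) c m" for c m
  define T where "T m = (D a m + E a m) * (D b (\<pi> m) + E b (\<pi> m)) - D a m * D b (\<pi> m)" for m
  have n: "n > 0" "1 \<le> real n"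
    using ab by auto
  have difference: "real n ^ 3 * dh0 \<pi> k n a b - fact k / (real n powi (2 * int k - 4)) *
      (\<Sum>f\<in>strinc_funs k n. \<Sum>g\<in>strinc_funs k n. \<Sum>m\<in>{1..k}. Bmat a b (f m) (g (\<pi> m))) =
      \<kappa> * (\<Sum>m\<in>{1..k}. T m)"
    unfolding \<kappa>_def T_def D_def E_def by (rule scaled_dh0_minus_strinc_sum_eq[OF ab])
  have "real n ^ 5 * \<bar>T m\<bar> \<le> C * (real n ^ k) ^ 2" if m: "m \<in> {1..k}" for m
  proof -
    have "\<pi> m \<in> {1..k}"
      using \<pi> m by (auto simp: bij_betw_def)
    then have "real n ^ 5 * \<bar>T m\<bar> \<le>
        (2 * (2 * real k) * (2 * real k ^ 3) + (2 * real k ^ 3) ^ 2) * (real n ^ k) ^ 2"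
      unfolding T_def D_def E_def using ab m
      by (intro abs_perturbed_product_le n(2) abs_diff_sum_inj_weight_le
          abs_diff_sum_collision_weight_le) auto
    moreover have "2 * (2 * real k) * (2 * real k ^ 3) + (2 * real k ^ 3) ^ 2 = C"
      by (simp add: C_def algebra_simps eval_nat_numeral)
    ultimately show ?thesis
      by simp
  qed
  then have "real n ^ 5 * (\<Sum>m\<in>{1..k}. \<bar>T m\<bar>) \<le> real k * C * (real n ^ k) ^ 2"
    using sum_mono[of "{1..k}" "\<lambda>m. real n ^ 5 * \<bar>T m\<bar>" "\<lambda>_. C * (real n ^ k) ^ 2"]
    by (simp add: sum_distrib_left)
  then have sum_le: "fact k / (real n * (real n ^ k) ^ 2) * (real n ^ 5 * (\<Sum>m\<in>{1..k}. \<bar>T m\<bar>)) \<le>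
      fact k / (real n * (real n ^ k) ^ 2) * (real k * C * (real n ^ k) ^ 2)"
    by (rule mult_left_mono) simp
  have "\<bar>\<kappa> * (\<Sum>m\<in>{1..k}. T m)\<bar> \<le> \<kappa> * (\<Sum>m\<in>{1..k}. \<bar>T m\<bar>)"
    unfolding abs_mult by (rule mult_mono) (auto simp: \<kappa>_def sum_abs)
  also have "\<dots> = fact k / (real n * (real n ^ k) ^ 2) * (real n ^ 5 * (\<Sum>m\<in>{1..k}. \<bar>T m\<bar>))"
    using n by (simp add: \<kappa>_def field_simps flip: power_mult power_add power_Suc)
  also have "\<dots> \<le> fact k * real k * C / real n"
    using sum_le n by (simp add: field_simps)
  finally show ?thesis
    unfolding difference C_def .
qed

lemma eventually_floor_mult_in:
  assumes "0 < \<alpha>" "\<alpha> < 1"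
  shows "eventually (\<lambda>n. nat \<lfloor>\<alpha> * real n\<rfloor> \<in> {1..n-1}) sequentially"
proof -
  obtain N :: nat where N: "1 / \<alpha> \<le> real N"
    using real_arch_simple by blast
  have "nat \<lfloor>\<alpha> * real n\<rfloor> \<in> {1..n-1}" if "N \<le> n" for n
  proof -
    have "1 / \<alpha> \<le> real n"
      using N that by linarith
    then have ge_1: "1 \<le> \<alpha> * real n"
      using assms by (simp add: field_simps)
    then have "0 < real n"
      by (cases n) auto
    then have "\<alpha> * real n < real n"
      using mult_strict_right_mono[OF assms(2) \<open>0 < real n\<close>] by simp
    then have "\<lfloor>\<alpha> * real n\<rfloor> < int n"
      by (simp add: floor_less_iff)
    moreover have "1 \<le> \<lfloor>\<alpha> * real n\<rfloor>"
      using ge_1 by (simp add: le_floor_iff)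
    ultimately show ?thesis
      by (simp add: nat_le_iff le_diff_conv2 del: One_nat_def) linarith
  qed
  then show ?thesis
    by (rule eventually_sequentiallyI)
qed

theorem lemma4:
  fixes \<pi> :: "nat \<Rightarrow> nat" and k :: nat and \<alpha> \<beta> :: real
  assumes "bij_betw \<pi> {1..k} {1..k}"
    and "0 < \<alpha>" "\<alpha> < 1" "0 < \<beta>" "\<beta> < 1"
  shows "\<forall>L. ((\<lambda>n. real n ^ 3 * dh0 \<pi> k n (nat \<lfloor>\<alpha> * real n\<rfloor>) (nat \<lfloor>\<beta> * real n\<rfloor>))
                  \<longlonglongrightarrow> L)
          \<longleftrightarrow> ((\<lambda>n. fact k / (real n powi (2 * int k - 4)) *
                  (\<Sum>f\<in>strinc_funs k n. \<Sum>g\<in>strinc_funs k n. \<Sum>m\<in>{1..k}.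
                     Bmat (nat \<lfloor>\<alpha> * real n\<rfloor>) (nat \<lfloor>\<beta> * real n\<rfloor>) (f m) (g (\<pi> m))))
                  \<longlonglongrightarrow> L)"
proof -
  let ?lhs = "\<lambda>n. real n ^ 3 * dh0 \<pi> k n (nat \<lfloor>\<alpha> * real n\<rfloor>) (nat \<lfloor>\<beta> * real n\<rfloor>)"
  let ?rhs = "\<lambda>n. fact k / (real n powi (2 * int k - 4)) *
    (\<Sum>f\<in>strinc_funs k n. \<Sum>g\<in>strinc_funs k n. \<Sum>m\<in>{1..k}.
      Bmat (nat \<lfloor>\<alpha> * real n\<rfloor>) (nat \<lfloor>\<beta> * real n\<rfloor>) (f m) (g (\<pi> m)))"
  define C where "C = fact k * real k * (8 * real k ^ 4 + 4 * real k ^ 6)"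
  have "eventually (\<lambda>n. nat \<lfloor>\<alpha> * real n\<rfloor> \<in> {1..n-1} \<and> nat \<lfloor>\<beta> * real n\<rfloor> \<in> {1..n-1}) sequentially"
    using eventually_floor_mult_in[OF assms(2,3)] eventually_floor_mult_in[OF assms(4,5)]
    by (rule eventually_conj)
  then have "eventually (\<lambda>n. norm (?lhs n - ?rhs n) \<le> C / real n) sequentially"
  proof (rule eventually_mono)
    fix n assume "nat \<lfloor>\<alpha> * real n\<rfloor> \<in> {1..n-1} \<and> nat \<lfloor>\<beta> * real n\<rfloor> \<in> {1..n-1}"
    then show "norm (?lhs n - ?rhs n) \<le> C / real n"
      unfolding real_norm_def C_def
      by (elim conjE) (rule abs_scaled_dh0_minus_strinc_sum_le[OF assms(1)])
  qed
  then have null: "(\<lambda>n. ?lhs n - ?rhs n) \<longlonglongrightarrow> 0"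
    by (rule Lim_null_comparison) (rule lim_const_over_n)
  show ?thesis
    by (intro allI) (rule Lim_transform_eq[OF null])
qed

end
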